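(* Let $\mathcal{C}$ be a non-empty k-category and $\mathcal{D}$ a perfect k-category. Then the k-category $\mathrm{Func}(\mathcal{C},\mathcal{D})$ is perfect.
   Context: A k-category is a small category whose object and morphism sets are k-spaces (compactly generated Hausdorff) such that the source, target, identity and composition maps are continuous (products in the category of k-spaces). A non-empty k-category $\mathcal{C}$ is perfect when the map $\mathrm{Mor}(\mathcal{C})\to\mathrm{Ob}(\mathcal{C})\times\mathrm{Ob}(\mathcal{C})$, $f\mapsto(\text{source}(f),\text{target}(f))$, is a homeomorphism. $\mathrm{Func}(\mathcal{C},\mathcal{D})$ is the k-category whose objects are the continuous functors $\mathcal{C}\to\mathcal{D}$, topologized as a subspace of the k-space $\mathrm{Mor}(\mathcal{D})^{\mathrm{Mor}(\mathcal{C})}$, and whose morphisms are continuous natural transformations, topologized as a closed subspace of $\mathrm{Ob}(\mathrm{Func})\times\mathrm{Ob}(\mathrm{Func})\times\mathrm{Mor}(\mathcal{D})^{\mathrm{Ob}(\mathcal{C})}$. *)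

theory Defs
  imports "HOL-Analysis.Analysis"
begin

definition kspace :: "'a topology \<Rightarrow> bool" where
  "kspace X \<longleftrightarrow> Hausdorff_space X \<and>
     (\<forall>U. U \<subseteq> topspace X \<longrightarrow>
          (\<forall>K. compactin X K \<longrightarrow> openin (subtopology X K) (U \<inter> K)) \<longrightarrow> openin X U)"

definition kify :: "'a topology \<Rightarrow> 'a topology" where
  "kify X = topology (\<lambda>U. U \<subseteq> topspace X \<and>
      (\<forall>K. compactin X K \<longrightarrow> openin (subtopology X K) (U \<inter> K)))"

text \<open>Binary product in the category of k-spaces: k-ification of the product topology.\<close>
definition kprod :: "'a topology \<Rightarrow> 'b topology \<Rightarrow> ('a \<times> 'b) topology" where
  "kprod X Y = kify (prod_topology X Y)"

text \<open>Compact-open topology on the continuous maps X \<rightarrow> Y (maps represented as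
functions that are extensional, i.e. undefined outside topspace X).\<close>
definition cmaps :: "'a topology \<Rightarrow> 'b topology \<Rightarrow> ('a \<Rightarrow> 'b) set" where
  "cmaps X Y = {f. continuous_map X Y f \<and> f \<in> extensional (topspace X)}"

definition compact_open :: "'a topology \<Rightarrow> 'b topology \<Rightarrow> ('a \<Rightarrow> 'b) topology" where
  "compact_open X Y = topology_generated_by
     (insert (cmaps X Y) {{f \<in> cmaps X Y. f ` K \<subseteq> U} | K U. compactin X K \<and> openin Y U})"

text \<open>The exponential object Y^X in k-spaces: k-ification of the compact-open topology.\<close>
definition kmap :: "'a topology \<Rightarrow> 'b topology \<Rightarrow> ('a \<Rightarrow> 'b) topology" where
  "kmap X Y = kify (compact_open X Y)"

text \<open>A small category with object set topspace (obT C), morphism set topspace (morT C);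
comp g f is the composite g \<circ> f, defined when tgt f = src g.\<close>
record ('o, 'm) kcat =
  obT :: "'o topology"
  morT :: "'m topology"
  src :: "'m \<Rightarrow> 'o"
  tgt :: "'m \<Rightarrow> 'o"
  ident :: "'o \<Rightarrow> 'm"
  comp :: "'m \<Rightarrow> 'm \<Rightarrow> 'm"

abbreviation Ob :: "('o, 'm, 'z) kcat_scheme \<Rightarrow> 'o set" where
  "Ob C \<equiv> topspace (obT C)"

abbreviation Mor :: "('o, 'm, 'z) kcat_scheme \<Rightarrow> 'm set" where
  "Mor C \<equiv> topspace (morT C)"

definition composable :: "('o, 'm, 'z) kcat_scheme \<Rightarrow> ('m \<times> 'm) set" where
  "composable C = {(g, f). g \<in> Mor C \<and> f \<in> Mor C \<and> src C g = tgt C f}"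

definition kcategory :: "('o, 'm, 'z) kcat_scheme \<Rightarrow> bool" where
  "kcategory C \<longleftrightarrow>
     kspace (obT C) \<and> kspace (morT C) \<and>
     continuous_map (morT C) (obT C) (src C) \<and>
     continuous_map (morT C) (obT C) (tgt C) \<and>
     continuous_map (obT C) (morT C) (ident C) \<and>
     continuous_map (subtopology (kprod (morT C) (morT C)) (composable C)) (morT C)
        (\<lambda>(g, f). comp C g f) \<and>
     (\<forall>x \<in> Ob C. src C (ident C x) = x \<and> tgt C (ident C x) = x) \<and>
     (\<forall>(g, f) \<in> composable C. src C (comp C g f) = src C f \<and> tgt C (comp C g f) = tgt C g) \<and>
     (\<forall>f \<in> Mor C. comp C f (ident C (src C f)) = f \<and> comp C (ident C (tgt C f)) f = f) \<and>
     (\<forall>h g f. (h, g) \<in> composable C \<longrightarrow> (g, f) \<in> composable C \<longrightarrow>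
         comp C h (comp C g f) = comp C (comp C h g) f)"

definition perfect :: "('o, 'm, 'z) kcat_scheme \<Rightarrow> bool" where
  "perfect C \<longleftrightarrow> Ob C \<noteq> {} \<and>
     homeomorphic_map (morT C) (kprod (obT C) (obT C)) (\<lambda>f. (src C f, tgt C f))"

text \<open>A continuous functor is represented by its morphism map (extensional on Mor C);
its object map is determined by it.\<close>
definition fob :: "('oc, 'mc, 'z1) kcat_scheme \<Rightarrow> ('od, 'md, 'z2) kcat_scheme
     \<Rightarrow> ('mc \<Rightarrow> 'md) \<Rightarrow> 'oc \<Rightarrow> 'od" where
  "fob C D F x = src D (F (ident C x))"

definition functors :: "('oc, 'mc, 'z1) kcat_scheme \<Rightarrow> ('od, 'md, 'z2) kcat_scheme
     \<Rightarrow> ('mc \<Rightarrow> 'md) set" where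
  "functors C D = {F. F \<in> extensional (Mor C) \<and> continuous_map (morT C) (morT D) F \<and>
      (\<forall>x \<in> Ob C. fob C D F x \<in> Ob D \<and> F (ident C x) = ident D (fob C D F x)) \<and>
      (\<forall>f \<in> Mor C. src D (F f) = fob C D F (src C f) \<and> tgt D (F f) = fob C D F (tgt C f)) \<and>
      (\<forall>(g, f) \<in> composable C. F (comp C g f) = comp D (F g) (F f))}"

definition nat_trans :: "('oc, 'mc, 'z1) kcat_scheme \<Rightarrow> ('od, 'md, 'z2) kcat_scheme
     \<Rightarrow> ('mc \<Rightarrow> 'md) \<Rightarrow> ('mc \<Rightarrow> 'md) \<Rightarrow> ('oc \<Rightarrow> 'md) \<Rightarrow> bool" where
  "nat_trans C D F G \<eta> \<longleftrightarrow> \<eta> \<in> extensional (Ob C) \<and> continuous_map (obT C) (morT D) \<eta> \<and>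
      (\<forall>x \<in> Ob C. src D (\<eta> x) = fob C D F x \<and> tgt D (\<eta> x) = fob C D G x) \<and>
      (\<forall>f \<in> Mor C. comp D (\<eta> (tgt C f)) (F f) = comp D (G f) (\<eta> (src C f)))"

definition FuncObT :: "('oc, 'mc, 'z1) kcat_scheme \<Rightarrow> ('od, 'md, 'z2) kcat_scheme
     \<Rightarrow> ('mc \<Rightarrow> 'md) topology" where
  "FuncObT C D = subtopology (kmap (morT C) (morT D)) (functors C D)"

text \<open>The k-category Func(C,D): objects are continuous functors (subspace of Mor(D)^Mor(C)),
morphisms are triples (F, G, eta) of continuous natural transformations, as a subspace of
Ob(Func) \<times> Ob(Func) \<times> Mor(D)^Ob(C) (products and exponentials in k-spaces).\<close>
definition Func :: "('oc, 'mc, 'z1) kcat_scheme \<Rightarrow> ('od, 'md, 'z2) kcat_scheme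
     \<Rightarrow> ('mc \<Rightarrow> 'md, ('mc \<Rightarrow> 'md) \<times> ('mc \<Rightarrow> 'md) \<times> ('oc \<Rightarrow> 'md)) kcat" where
  "Func C D =
     \<lparr> obT = FuncObT C D,
       morT = subtopology (kprod (FuncObT C D) (kprod (FuncObT C D) (kmap (obT C) (morT D))))
                {(F, G, \<eta>). F \<in> functors C D \<and> G \<in> functors C D \<and> nat_trans C D F G \<eta>},
       src = (\<lambda>(F, G, \<eta>). F),
       tgt = (\<lambda>(F, G, \<eta>). G),
       ident = (\<lambda>F. (F, F, \<lambda>x \<in> Ob C. F (ident C x))),
       comp = (\<lambda>(G, H, \<theta>) (F, G', \<eta>). (F, H, \<lambda>x \<in> Ob C. comp D (\<theta> x) (\<eta> x))) \<rparr>"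

end

theory Submission
  imports Defs
begin

text \<open>Since source and target identify Mor(D) with Ob(D) \<times> Ob(D), between any two functors
F, G there is exactly one candidate for a natural transformation, namely x \<mapsto> \<psi>(F x, G x)
with \<psi> the inverse of (src, tgt); it is automatically natural because both sides of the
naturality square are morphisms with the same endpoints. Hence (src, tgt) on Mor(Func(C,D)) is
a bijection onto pairs of functors with inverse (F, G) \<mapsto> (F, G, \<psi>(F -, G -)). The only real
work is continuity of this inverse into the k-ified compact-open topology: it suffices to
check it on compact sets, where it follows from the exponential law for compact domains and
continuity of evaluation on compact subsets of the Hausdorff space Mor(C).\<close>

section \<open>k-ification\<close>

lemma istopology_kify:
  "istopology (\<lambda>U. U \<subseteq> topspace X \<and>
      (\<forall>K. compactin X K \<longrightarrow> openin (subtopology X K) (U \<inter> K)))"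
proof -
  have Int_closed: "S \<inter> T \<subseteq> topspace X \<and> (\<forall>K. compactin X K \<longrightarrow> openin (subtopology X K) (S \<inter> T \<inter> K))"
    if a: "S \<subseteq> topspace X \<and> (\<forall>K. compactin X K \<longrightarrow> openin (subtopology X K) (S \<inter> K))"
     "T \<subseteq> topspace X \<and> (\<forall>K. compactin X K \<longrightarrow> openin (subtopology X K) (T \<inter> K))" for S T
  proof (intro conjI allI impI)
    fix K assume "compactin X K"
    then have "openin (subtopology X K) ((S \<inter> K) \<inter> (T \<inter> K))" using a by blast
    moreover have "(S \<inter> K) \<inter> (T \<inter> K) = S \<inter> T \<inter> K" by blast
    ultimately show "openin (subtopology X K) (S \<inter> T \<inter> K)" by simp
  qed (use a in auto)
  have Union_closed: "\<Union>\<K> \<subseteq> topspace X \<and> (\<forall>K. compactin X K \<longrightarrow> openin (subtopology X K) (\<Union>\<K> \<inter> K))"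
    if a: "\<forall>U\<in>\<K>. U \<subseteq> topspace X \<and> (\<forall>K. compactin X K \<longrightarrow> openin (subtopology X K) (U \<inter> K))" for \<K>
  proof (intro conjI allI impI)
    fix K assume "compactin X K"
    then have "openin (subtopology X K) (\<Union>U\<in>\<K>. U \<inter> K)" using a by (intro openin_Union) auto
    moreover have "(\<Union>U\<in>\<K>. U \<inter> K) = \<Union>\<K> \<inter> K" by blast
    ultimately show "openin (subtopology X K) (\<Union>\<K> \<inter> K)" by simp
  qed (use a in auto)
  show ?thesis unfolding istopology_def using Int_closed Union_closed by blast
qed

lemma openin_kify:
  "openin (kify X) U \<longleftrightarrow> U \<subseteq> topspace X \<and>
      (\<forall>K. compactin X K \<longrightarrow> openin (subtopology X K) (U \<inter> K))"
  unfolding kify_def by (simp only: topology_inverse'[OF istopology_kify])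

lemma openin_kify_if_openin: "openin X U \<Longrightarrow> openin (kify X) U"
  unfolding openin_kify using openin_subset openin_subtopology_Int by blast

lemma topspace_kify [simp]: "topspace (kify X) = topspace X"
proof -
  have "openin (kify X) (topspace X)" by (simp add: openin_kify_if_openin)
  moreover have "openin (kify X) U \<Longrightarrow> U \<subseteq> topspace X" for U by (simp add: openin_kify)
  ultimately show ?thesis by (metis openin_subset subset_antisym openin_topspace)
qed

lemma kify_kspace: "kspace X \<Longrightarrow> kify X = X"
  unfolding topology_eq by (metis kspace_def openin_kify_if_openin openin_kify)

lemma continuous_map_from_kify: "continuous_map X Y f \<Longrightarrow> continuous_map (kify X) Y f"
  by (simp add: continuous_map_def openin_kify_if_openin)

lemma continuous_map_compact_subtopology_kify:
  assumes "compactin X K"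
  shows "continuous_map (subtopology X K) (kify X) id"
  unfolding continuous_map_def
proof (intro conjI allI impI)
  fix U assume "openin (kify X) U"
  moreover have "{x \<in> topspace (subtopology X K). id x \<in> U} = U \<inter> K"
    using \<open>openin (kify X) U\<close> by (auto simp: openin_kify)
  ultimately show "openin (subtopology X K) {x \<in> topspace (subtopology X K). id x \<in> U}"
    using assms by (simp add: openin_kify)
qed auto

lemma continuous_map_kify_compactwise:
  assumes "\<And>K. compactin X K \<Longrightarrow> continuous_map (subtopology X K) Y f"
    and "f ` topspace X \<subseteq> topspace Y"
  shows "continuous_map (kify X) Y f"
  unfolding continuous_map_def
proof (intro conjI allI impI)
  fix U assume U: "openin Y U"
  show "openin (kify X) {x \<in> topspace (kify X). f x \<in> U}"
    unfolding openin_kify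
  proof (intro conjI allI impI)
    fix K assume K: "compactin X K"
    have "{x \<in> topspace (subtopology X K). f x \<in> U} = {x \<in> topspace (kify X). f x \<in> U} \<inter> K"
      by auto
    then show "openin (subtopology X K) ({x \<in> topspace (kify X). f x \<in> U} \<inter> K)"
      using openin_continuous_map_preimage[OF assms(1)[OF K] U] by simp
  qed auto
qed (use assms in auto)

lemma continuous_map_into_kify_compact:
  assumes "compact_space Z" "continuous_map Z Y h"
  shows "continuous_map Z (kify Y) h"
  unfolding continuous_map_def
proof (intro conjI allI impI)
  show "h \<in> topspace Z \<rightarrow> topspace (kify Y)"
    using continuous_map_funspace[OF assms(2)] by simp
next
  fix U assume U: "openin (kify Y) U"
  let ?L = "h ` topspace Z"
  have "compactin Y ?L"
    using image_compactin assms compact_space_def by blast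
  then have "openin (subtopology Y ?L) (U \<inter> ?L)"
    using U unfolding openin_kify by blast
  moreover have "continuous_map Z (subtopology Y ?L) h"
    using assms(2) by (simp add: continuous_map_in_subtopology)
  ultimately have "openin Z {x \<in> topspace Z. h x \<in> U \<inter> ?L}"
    by (rule openin_continuous_map_preimage[rotated])
  moreover have "{x \<in> topspace Z. h x \<in> U \<inter> ?L} = {x \<in> topspace Z. h x \<in> U}" by auto
  ultimately show "openin Z {x \<in> topspace Z. h x \<in> U}" by simp
qed

lemma topspace_kprod [simp]: "topspace (kprod X Y) = topspace X \<times> topspace Y"
  by (simp add: kprod_def)

lemma continuous_map_kprod_fst: "continuous_map (kprod X Y) X fst"
  unfolding kprod_def by (intro continuous_map_from_kify continuous_map_fst)

lemma continuous_map_kprod_snd: "continuous_map (kprod X Y) Y snd"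
  unfolding kprod_def by (intro continuous_map_from_kify continuous_map_snd)

lemma continuous_map_kify_paired:
  assumes f: "continuous_map (kify X) Y f" and g: "continuous_map (kify X) Z g"
  shows "continuous_map (kify X) (kprod Y Z) (\<lambda>x. (f x, g x))"
proof (rule continuous_map_kify_compactwise)
  fix K assume K: "compactin X K"
  have "continuous_map (subtopology X K) (prod_topology Y Z) (\<lambda>x. (f x, g x))"
    using continuous_map_compose[OF continuous_map_compact_subtopology_kify[OF K] f]
      continuous_map_compose[OF continuous_map_compact_subtopology_kify[OF K] g]
    by (simp add: continuous_map_paired o_def)
  then show "continuous_map (subtopology X K) (kprod Y Z) (\<lambda>x. (f x, g x))"
    unfolding kprod_def by (rule continuous_map_into_kify_compact[OF compact_space_subtopology[OF K]])
next
  show "(\<lambda>x. (f x, g x)) ` topspace X \<subseteq> topspace (kprod Y Z)"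
    using continuous_map_image_subset_topspace[OF f] continuous_map_image_subset_topspace[OF g]
    unfolding kprod_def by auto
qed

section \<open>The compact-open topology\<close>

lemma topspace_compact_open [simp]: "topspace (compact_open X Y) = cmaps X Y"
  unfolding compact_open_def topology_generated_by_topspace by auto

lemma openin_compact_open_basic:
  "compactin X K \<Longrightarrow> openin Y U \<Longrightarrow> openin (compact_open X Y) {f \<in> cmaps X Y. f ` K \<subseteq> U}"
  unfolding compact_open_def by (rule topology_generated_by_Basis) blast

lemma continuous_map_eval_compact:
  assumes "Hausdorff_space X" "compactin X K"
  shows "continuous_map (prod_topology (compact_open X Y) (subtopology X K)) Y (\<lambda>(f, x). f x)"
  unfolding continuous_map_def
proof (intro conjI allI impI)
  show "(\<lambda>(f, x). f x) \<in> topspace (prod_topology (compact_open X Y) (subtopology X K)) \<rightarrow> topspace Y"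
    by (auto simp: cmaps_def continuous_map_def)
next
  fix U assume U: "openin Y U"
  let ?T = "prod_topology (compact_open X Y) (subtopology X K)"
  show "openin ?T {p \<in> topspace ?T. (\<lambda>(f, x). f x) p \<in> U}"
  proof (subst openin_subopen, intro ballI)
    fix p assume "p \<in> {p \<in> topspace ?T. (\<lambda>(f, x). f x) p \<in> U}"
    then obtain f0 x0 where p: "p = (f0, x0)" and f0: "f0 \<in> cmaps X Y"
      and x0: "x0 \<in> topspace X \<inter> K" "f0 x0 \<in> U"
      by auto
    define V where "V = {x \<in> topspace (subtopology X K). f0 x \<in> U}"
    have "continuous_map (subtopology X K) Y f0"
      using f0 by (simp add: cmaps_def continuous_map_from_subtopology)
    then have V: "openin (subtopology X K) V" "x0 \<in> V"
      using U x0 by (auto simp: V_def continuous_map_def)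
    \<comment> \<open>Compact Hausdorff spaces are regular, so x0 has a compact neighbourhood inside V.\<close>
    have "regular_space (subtopology X K)"
      by (simp add: assms compact_Hausdorff_imp_regular_space compact_space_subtopology
          Hausdorff_space_subtopology)
    then obtain N L where N: "openin (subtopology X K) N" "closedin (subtopology X K) L"
      "x0 \<in> N" "N \<subseteq> L" "L \<subseteq> V"
      using V unfolding neighbourhood_base_of_closedin[symmetric] neighbourhood_base_of by meson
    have "compactin X L"
      using N(2) assms(2) closedin_compact_space compact_space_subtopology compactin_subtopology
      by blast
    define G where "G = {f \<in> cmaps X Y. f ` L \<subseteq> U}"
    have "openin ?T (G \<times> N)"
      using openin_compact_open_basic[OF \<open>compactin X L\<close> U] N(1)
      by (simp add: openin_prod_Times_iff G_def)
    moreover have "p \<in> G \<times> N" using p f0 N V_def by (auto simp: G_def)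
    moreover have "G \<times> N \<subseteq> {p \<in> topspace ?T. (\<lambda>(f, x). f x) p \<in> U}"
      using N(4) openin_subset[OF N(1)] by (auto simp: G_def image_subset_iff subset_iff)
    ultimately show "\<exists>T. openin ?T T \<and> p \<in> T \<and> T \<subseteq> {p \<in> topspace ?T. (\<lambda>(f, x). f x) p \<in> U}"
      by blast
  qed
qed

lemma continuous_map_compact_open_curry:
  assumes Z: "compact_space Z"
    and g: "\<And>z. z \<in> topspace Z \<Longrightarrow> g z \<in> cmaps X Y"
    and cont: "\<And>K. compactin X K \<Longrightarrow>
      continuous_map (prod_topology Z (subtopology X K)) Y (\<lambda>(z, x). g z x)"
  shows "continuous_map Z (compact_open X Y) g"
  unfolding compact_open_def
proof (rule continuous_on_generated_topo)
  show "g ` topspace Z \<subseteq>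
      \<Union>(insert (cmaps X Y) {{f \<in> cmaps X Y. f ` K \<subseteq> U} |K U. compactin X K \<and> openin Y U})"
    using g by auto
next
  fix S assume "S \<in> insert (cmaps X Y) {{f \<in> cmaps X Y. f ` K \<subseteq> U} |K U. compactin X K \<and> openin Y U}"
  then consider "S = cmaps X Y"
    | K U where "S = {f \<in> cmaps X Y. f ` K \<subseteq> U}" "compactin X K" "openin Y U"
    by blast
  then show "openin Z (g -` S \<inter> topspace Z)"
  proof cases
    case 1
    then have "g -` S \<inter> topspace Z = topspace Z" using g by auto
    then show ?thesis by simp
  next
    case (2 K U)
    let ?P = "prod_topology Z (subtopology X K)"
    \<comment> \<open>The complement of the preimage is the projection of a closed set along the compact factor K.\<close>
    define B where "B = {p \<in> topspace ?P. (\<lambda>(z, x). g z x) p \<in> topspace Y - U}"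
    have "closedin ?P B"
      unfolding B_def using cont[OF 2(2)] closedin_diff[OF closedin_topspace 2(3)]
      by (rule closedin_continuous_map_preimage)
    then have "closedin Z (fst ` B)"
      using closed_map_fst[OF compact_space_subtopology[OF 2(2)]] unfolding closed_map_def by blast
    moreover have "g -` S \<inter> topspace Z = topspace Z - fst ` B"
    proof -
      have "g z ` K \<subseteq> U \<longleftrightarrow> z \<notin> fst ` B" if z: "z \<in> topspace Z" for z
      proof -
        have "g z x \<in> topspace Y" if "x \<in> K" for x
          using g[OF z] that compactin_subset_topspace[OF 2(2)]
          by (auto simp: cmaps_def dest: continuous_map_image_subset_topspace)
        then have "z \<in> fst ` B \<longleftrightarrow> (\<exists>x\<in>K. g z x \<notin> U)"
          using z compactin_subset_topspace[OF 2(2)] by (auto simp: B_def image_iff)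
        then show ?thesis by blast
      qed
      then show ?thesis using 2(1) g by auto
    qed
    ultimately show ?thesis by (simp add: openin_diff)
  qed
qed

lemma kcategory_closed:
  assumes "kcategory C"
  shows kcategory_src_in_Ob: "f \<in> Mor C \<Longrightarrow> src C f \<in> Ob C"
    and kcategory_tgt_in_Ob: "f \<in> Mor C \<Longrightarrow> tgt C f \<in> Ob C"
    and kcategory_ident_in_Mor: "x \<in> Ob C \<Longrightarrow> ident C x \<in> Mor C"
    and kcategory_comp_in_Mor: "(g, f) \<in> composable C \<Longrightarrow> comp C g f \<in> Mor C"
proof -
  have comp: "continuous_map (subtopology (kprod (morT C) (morT C)) (composable C)) (morT C)
      (\<lambda>(g, f). comp C g f)"
    using assms unfolding kcategory_def by blast
  show "comp C g f \<in> Mor C" if "(g, f) \<in> composable C"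
  proof -
    have "(g, f) \<in> topspace (subtopology (kprod (morT C) (morT C)) (composable C))"
      using that by (auto simp: composable_def)
    then show ?thesis
      using continuous_map_image_subset_topspace[OF comp] by auto
  qed
qed (use assms in \<open>auto simp: kcategory_def continuous_map_def Pi_iff\<close>)

lemma functor_in_Mor: "F \<in> functors C D \<Longrightarrow> f \<in> Mor C \<Longrightarrow> F f \<in> Mor D"
  by (auto simp: functors_def continuous_map_def)

lemma fob_in_Ob: "F \<in> functors C D \<Longrightarrow> x \<in> Ob C \<Longrightarrow> fob C D F x \<in> Ob D"
  by (simp add: functors_def)

lemma continuous_map_fob:
  assumes "kcategory C" "kcategory D" "F \<in> functors C D"
  shows "continuous_map (obT C) (obT D) (fob C D F)"
proof -
  have "fob C D F = src D \<circ> F \<circ> ident C"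
    by (simp add: fun_eq_iff fob_def)
  moreover have "continuous_map (obT C) (obT D) (src D \<circ> F \<circ> ident C)"
    using assms by (intro continuous_map_compose) (auto simp: kcategory_def functors_def)
  ultimately show ?thesis by simp
qed

lemma constant_functor:
  assumes C: "kcategory C" and D: "kcategory D" and d: "d \<in> Ob D"
  shows "(\<lambda>f\<in>Mor C. ident D d) \<in> functors C D"
proof -
  have iM: "ident D d \<in> Mor D" and st: "src D (ident D d) = d" "tgt D (ident D d) = d"
    using D d kcategory_ident_in_Mor[OF D d] by (auto simp: kcategory_def)
  then have "comp D (ident D d) (ident D d) = ident D d"
    using D unfolding kcategory_def by metis
  moreover have "continuous_map (morT C) (morT D) (\<lambda>f\<in>Mor C. ident D d)"
    using iM by (intro continuous_map_eq[OF continuous_map_const[THEN iffD2]]) auto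
  ultimately show ?thesis
    using iM st d kcategory_ident_in_Mor[OF C] kcategory_src_in_Ob[OF C] kcategory_tgt_in_Ob[OF C]
      kcategory_comp_in_Mor[OF C]
    by (auto simp: functors_def fob_def composable_def)
qed

lemma topspace_FuncObT [simp]: "topspace (FuncObT C D) = functors C D"
  by (auto simp: FuncObT_def kmap_def cmaps_def functors_def)

lemma continuous_map_FuncObT_compact_open:
  "continuous_map (FuncObT C D) (compact_open (morT C) (morT D)) id"
  unfolding FuncObT_def kmap_def
  by (intro continuous_map_from_subtopology continuous_map_from_kify continuous_map_id)

lemma continuous_map_fob_eval:
  assumes C: "kcategory C" and D: "kcategory D" and K: "compactin (obT C) K"
  shows "continuous_map (prod_topology (FuncObT C D) (subtopology (obT C) K)) (obT D)
           (\<lambda>(F, x). fob C D F x)"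
proof -
  have ident: "continuous_map (obT C) (morT C) (ident C)"
    using C by (simp add: kcategory_def)
  let ?K' = "ident C ` K"
  have "continuous_map (prod_topology (FuncObT C D) (subtopology (obT C) K))
      (prod_topology (compact_open (morT C) (morT D)) (subtopology (morT C) ?K'))
      (\<lambda>p. (fst p, ident C (snd p)))"
  proof (intro continuous_map_pairedI)
    show "continuous_map (prod_topology (FuncObT C D) (subtopology (obT C) K))
        (compact_open (morT C) (morT D)) fst"
      using continuous_map_compose[OF continuous_map_fst continuous_map_FuncObT_compact_open]
      by (simp add: o_def)
    show "continuous_map (prod_topology (FuncObT C D) (subtopology (obT C) K))
        (subtopology (morT C) ?K') (\<lambda>p. ident C (snd p))"
      using ident by (auto simp: continuous_map_in_subtopology continuous_map_from_subtopology
          intro!: continuous_map_compose[OF continuous_map_snd, unfolded o_def])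
  qed
  moreover have "continuous_map (prod_topology (compact_open (morT C) (morT D)) (subtopology (morT C) ?K'))
      (morT D) (\<lambda>(F, m). F m)"
    using C image_compactin[OF K ident]
    by (intro continuous_map_eval_compact) (auto simp: kcategory_def kspace_def)
  moreover have "continuous_map (morT D) (obT D) (src D)"
    using D by (simp add: kcategory_def)
  ultimately have "continuous_map (prod_topology (FuncObT C D) (subtopology (obT C) K)) (obT D)
      (src D \<circ> (\<lambda>(F, m). F m) \<circ> (\<lambda>p. (fst p, ident C (snd p))))"
    by (intro continuous_map_compose)
  then show ?thesis by (simp add: fob_def o_def case_prod_unfold)
qed

lemma Func_simps:
  "obT (Func C D) = FuncObT C D"
  "morT (Func C D) = subtopology (kprod (FuncObT C D) (kprod (FuncObT C D) (kmap (obT C) (morT D))))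
     {(F, G, \<eta>). F \<in> functors C D \<and> G \<in> functors C D \<and> nat_trans C D F G \<eta>}"
  "src (Func C D) = (\<lambda>(F, G, \<eta>). F)"
  "tgt (Func C D) = (\<lambda>(F, G, \<eta>). G)"
  by (simp_all add: Func_def)

section \<open>Natural transformations into a perfect k-category\<close>

locale perfect_codomain =
  fixes C :: "('oc, 'mc, 'z1) kcat_scheme" and D :: "('od, 'md, 'z2) kcat_scheme"
    and \<psi> :: "'od \<times> 'od \<Rightarrow> 'md"
  assumes kcat_C: "kcategory C" and kcat_D: "kcategory D"
    and endpoints_homeo: "homeomorphic_maps (morT D) (kprod (obT D) (obT D))
      (\<lambda>f. (src D f, tgt D f)) \<psi>"
begin

lemma continuous_map_psi: "continuous_map (kprod (obT D) (obT D)) (morT D) \<psi>"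
  using endpoints_homeo by (simp add: homeomorphic_maps_def)

lemma psi_in_Mor: "x \<in> Ob D \<Longrightarrow> y \<in> Ob D \<Longrightarrow> \<psi> (x, y) \<in> Mor D"
  using continuous_map_image_subset_topspace[OF continuous_map_psi] by auto

lemma src_psi: "x \<in> Ob D \<Longrightarrow> y \<in> Ob D \<Longrightarrow> src D (\<psi> (x, y)) = x"
  using endpoints_homeo by (simp add: homeomorphic_maps_def)

lemma tgt_psi: "x \<in> Ob D \<Longrightarrow> y \<in> Ob D \<Longrightarrow> tgt D (\<psi> (x, y)) = y"
  using endpoints_homeo by (simp add: homeomorphic_maps_def)

lemma psi_src_tgt: "f \<in> Mor D \<Longrightarrow> \<psi> (src D f, tgt D f) = f"
  using endpoints_homeo by (simp add: homeomorphic_maps_def)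

lemma Mor_eqI: "f \<in> Mor D \<Longrightarrow> g \<in> Mor D \<Longrightarrow> src D f = src D g \<Longrightarrow> tgt D f = tgt D g \<Longrightarrow> f = g"
  by (metis psi_src_tgt)

definition unique_nt :: "('mc \<Rightarrow> 'md) \<Rightarrow> ('mc \<Rightarrow> 'md) \<Rightarrow> 'oc \<Rightarrow> 'md" where
  "unique_nt F G = (\<lambda>x\<in>Ob C. \<psi> (fob C D F x, fob C D G x))"

lemma continuous_map_unique_nt:
  assumes F: "F \<in> functors C D" and G: "G \<in> functors C D"
  shows "continuous_map (obT C) (morT D) (unique_nt F G)"
proof -
  have "continuous_map (kify (obT C)) (kprod (obT D) (obT D)) (\<lambda>x. (fob C D F x, fob C D G x))"
    using continuous_map_fob[OF kcat_C kcat_D F] continuous_map_fob[OF kcat_C kcat_D G]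
    by (intro continuous_map_kify_paired continuous_map_from_kify)
  moreover have "kify (obT C) = obT C"
    using kcat_C by (simp add: kcategory_def kify_kspace)
  ultimately have "continuous_map (obT C) (morT D) (\<psi> \<circ> (\<lambda>x. (fob C D F x, fob C D G x)))"
    using continuous_map_psi by (metis continuous_map_compose)
  then show ?thesis
    by (rule continuous_map_eq) (simp add: unique_nt_def)
qed

lemma nat_trans_unique_nt:
  assumes F: "F \<in> functors C D" and G: "G \<in> functors C D"
  shows "nat_trans C D F G (unique_nt F G)"
  unfolding nat_trans_def
proof (intro conjI ballI)
  show "unique_nt F G \<in> extensional (Ob C)" by (simp add: unique_nt_def)
  show "continuous_map (obT C) (morT D) (unique_nt F G)"
    using continuous_map_unique_nt[OF F G] .
next
  fix x assume "x \<in> Ob C"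
  then show "src D (unique_nt F G x) = fob C D F x" "tgt D (unique_nt F G x) = fob C D G x"
    using fob_in_Ob[OF F] fob_in_Ob[OF G] by (simp_all add: unique_nt_def src_psi tgt_psi)
next
  fix f assume f: "f \<in> Mor C"
  let ?\<eta> = "unique_nt F G"
  \<comment> \<open>Both sides of the naturality square are morphisms F (src f) \<rightarrow> G (tgt f).\<close>
  have ends: "?\<eta> x \<in> Mor D \<and> src D (?\<eta> x) = fob C D F x \<and> tgt D (?\<eta> x) = fob C D G x"
    if x: "x \<in> Ob C" for x
  proof -
    have "fob C D F x \<in> Ob D" "fob C D G x \<in> Ob D"
      using fob_in_Ob[OF F x] fob_in_Ob[OF G x] .
    then show ?thesis using x by (simp add: unique_nt_def psi_in_Mor src_psi tgt_psi)
  qed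
  have s: "src C f \<in> Ob C" and t: "tgt C f \<in> Ob C"
    using kcategory_src_in_Ob[OF kcat_C f] kcategory_tgt_in_Ob[OF kcat_C f] .
  have FG: "F f \<in> Mor D" "G f \<in> Mor D"
    "src D (F f) = fob C D F (src C f)" "tgt D (F f) = fob C D F (tgt C f)"
    "src D (G f) = fob C D G (src C f)" "tgt D (G f) = fob C D G (tgt C f)"
    using functor_in_Mor[OF F f] functor_in_Mor[OF G f] f F G by (auto simp: functors_def)
  have c1: "(?\<eta> (tgt C f), F f) \<in> composable D" and c2: "(G f, ?\<eta> (src C f)) \<in> composable D"
    using ends[OF s] ends[OF t] FG by (auto simp: composable_def)
  have "src D (comp D g h) = src D h" "tgt D (comp D g h) = tgt D g"
    if "(g, h) \<in> composable D" for g h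
    using kcat_D that unfolding kcategory_def by fast+
  then show "comp D (?\<eta> (tgt C f)) (F f) = comp D (G f) (?\<eta> (src C f))"
    using c1 c2 ends[OF s] ends[OF t] FG
    by (intro Mor_eqI kcategory_comp_in_Mor[OF kcat_D]) simp_all
qed

lemma nat_trans_eq_unique_nt:
  assumes "nat_trans C D F G \<eta>"
  shows "\<eta> = unique_nt F G"
proof
  fix x show "\<eta> x = unique_nt F G x"
  proof (cases "x \<in> Ob C")
    case True
    then have "\<eta> x \<in> Mor D"
      using assms continuous_map_image_subset_topspace unfolding nat_trans_def by blast
    then show ?thesis
      using assms True psi_src_tgt[of "\<eta> x"] by (simp add: nat_trans_def unique_nt_def)
  next
    case False
    then show ?thesis using assms by (simp add: nat_trans_def unique_nt_def extensional_def)
  qed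
qed

lemma continuous_map_unique_nt_paired:
  "continuous_map (kprod (FuncObT C D) (FuncObT C D)) (kmap (obT C) (morT D))
     (\<lambda>(F, G). unique_nt F G)"
  unfolding kprod_def
proof (rule continuous_map_kify_compactwise)
  fix KK assume "compactin (prod_topology (FuncObT C D) (FuncObT C D)) KK"
  let ?Z = "subtopology (prod_topology (FuncObT C D) (FuncObT C D)) KK"
  have Z: "compact_space ?Z"
    using \<open>compactin _ KK\<close> by (rule compact_space_subtopology)
  have "continuous_map ?Z (compact_open (obT C) (morT D)) (\<lambda>(F, G). unique_nt F G)"
  proof (rule continuous_map_compact_open_curry[OF Z])
    fix z assume "z \<in> topspace ?Z"
    then show "(\<lambda>(F, G). unique_nt F G) z \<in> cmaps (obT C) (morT D)"
      using continuous_map_unique_nt by (auto simp: cmaps_def unique_nt_def)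
  next
    fix K assume K: "compactin (obT C) K"
    let ?P = "prod_topology ?Z (subtopology (obT C) K)"
    have fob: "continuous_map ?P (obT D) (\<lambda>(z, x). fob C D (sel z) x)"
      if sel: "continuous_map ?Z (FuncObT C D) sel" for sel
    proof -
      have "continuous_map ?P (prod_topology (FuncObT C D) (subtopology (obT C) K))
          (\<lambda>p. (sel (fst p), snd p))"
        using continuous_map_compose[OF continuous_map_fst sel]
        by (intro continuous_map_pairedI continuous_map_snd) (simp add: o_def)
      from continuous_map_compose[OF this continuous_map_fob_eval[OF kcat_C kcat_D K]]
      show ?thesis by (simp add: o_def case_prod_unfold)
    qed
    have "continuous_map ?P (prod_topology (obT D) (obT D))
        (\<lambda>(z, x). (fob C D (fst z) x, fob C D (snd z) x))"
      using fob[OF continuous_map_from_subtopology[OF continuous_map_fst]]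
        fob[OF continuous_map_from_subtopology[OF continuous_map_snd]]
      by (simp add: continuous_map_paired case_prod_unfold)
    then have "continuous_map ?P (kprod (obT D) (obT D))
        (\<lambda>(z, x). (fob C D (fst z) x, fob C D (snd z) x))"
      unfolding kprod_def
      using Z K by (intro continuous_map_into_kify_compact)
        (simp_all add: compact_space_prod_topology compact_space_subtopology)
    from continuous_map_compose[OF this continuous_map_psi]
    show "continuous_map ?P (morT D) (\<lambda>(z, x). (\<lambda>(F, G). unique_nt F G) z x)"
      by (rule continuous_map_eq) (auto simp: unique_nt_def)
  qed
  then show "continuous_map ?Z (kmap (obT C) (morT D)) (\<lambda>(F, G). unique_nt F G)"
    unfolding kmap_def by (rule continuous_map_into_kify_compact[OF Z])
next
  show "(\<lambda>(F, G). unique_nt F G) ` topspace (prod_topology (FuncObT C D) (FuncObT C D))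
      \<subseteq> topspace (kmap (obT C) (morT D))"
    using continuous_map_unique_nt by (auto simp: kmap_def cmaps_def unique_nt_def)
qed

lemma homeomorphic_maps_Func_endpoints:
  "homeomorphic_maps (morT (Func C D)) (kprod (obT (Func C D)) (obT (Func C D)))
     (\<lambda>f. (src (Func C D) f, tgt (Func C D) f)) (\<lambda>(F, G). (F, G, unique_nt F G))"
proof -
  let ?Fo = "FuncObT C D" and ?M = "kmap (obT C) (morT D)"
  let ?S = "{(F, G, \<eta>). F \<in> functors C D \<and> G \<in> functors C D \<and> nat_trans C D F G \<eta>}"
  have topspace_Mor: "Mor (Func C D) = ?S"
    by (auto simp: Func_simps kmap_def nat_trans_def cmaps_def)
  have "continuous_map (kprod ?Fo (kprod ?Fo ?M)) (kprod ?Fo ?Fo) (\<lambda>f. (fst f, fst (snd f)))"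
    unfolding kprod_def[of ?Fo "kprod ?Fo ?M"]
    using continuous_map_kprod_fst[of ?Fo "kprod ?Fo ?M"]
      continuous_map_compose[OF continuous_map_kprod_snd continuous_map_kprod_fst, of ?Fo ?Fo ?M]
    by (intro continuous_map_kify_paired) (simp_all add: kprod_def o_def)
  then have endpoints: "continuous_map (morT (Func C D)) (kprod ?Fo ?Fo)
      (\<lambda>f. (src (Func C D) f, tgt (Func C D) f))"
    by (auto simp: Func_simps case_prod_unfold intro: continuous_map_from_subtopology)
  have "continuous_map (kprod ?Fo ?Fo) (kprod ?Fo (kprod ?Fo ?M)) (\<lambda>p. (fst p, snd p, unique_nt (fst p) (snd p)))"
    unfolding kprod_def[of ?Fo ?Fo]
    using continuous_map_kprod_fst[of ?Fo ?Fo] continuous_map_kprod_snd[of ?Fo ?Fo]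
      continuous_map_unique_nt_paired
    by (intro continuous_map_kify_paired) (simp_all add: kprod_def case_prod_unfold)
  then have inverse: "continuous_map (kprod ?Fo ?Fo) (morT (Func C D)) (\<lambda>(F, G). (F, G, unique_nt F G))"
    unfolding Func_simps using nat_trans_unique_nt
    by (auto simp: case_prod_unfold intro!: continuous_map_into_subtopology)
  show ?thesis
    unfolding homeomorphic_maps_def
    using endpoints inverse nat_trans_eq_unique_nt
    by (auto simp: topspace_Mor Func_simps)
qed

end

theorem mainTheorem5:
  fixes C :: "('oc, 'mc) kcat" and D :: "('od, 'md) kcat"
  assumes "kcategory C" and "Ob C \<noteq> {}"
    and "kcategory D" and "perfect D"
  shows "perfect (Func C D)"
proof -
  obtain \<psi> where "homeomorphic_maps (morT D) (kprod (obT D) (obT D)) (\<lambda>f. (src D f, tgt D f)) \<psi>"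
    using \<open>perfect D\<close> unfolding perfect_def homeomorphic_map_maps by blast
  then interpret perfect_codomain C D \<psi>
    using assms by unfold_locales
  obtain d where "d \<in> Ob D"
    using \<open>perfect D\<close> unfolding perfect_def by blast
  then have "Ob (Func C D) \<noteq> {}"
    using constant_functor[OF kcat_C kcat_D] by (auto simp: Func_simps)
  then show ?thesis
    unfolding perfect_def homeomorphic_map_maps using homeomorphic_maps_Func_endpoints by blast
qed

end
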